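(* Let $d=2$, $n=1$, and let $\mathcal{M}=\{\mathcal{M}_0,\mathcal{M}_1\}$ be a single-qubit instrument with generalized Pauli fidelities $\tilde\nu_{s,t}$, where $\tilde\nu_{0,1}\neq0$ and $\tilde\nu_{1,0}\neq 0$. Let $r=\tilde\nu_{1,0}/\tilde\nu_{0,1}$ and define the linear map $\mathcal{B}$ on $2\times2$ matrices by $$\mathcal{B}(I)=I,\quad \mathcal{B}(X)=X,\quad \mathcal{B}(Y)=Y,\quad \mathcal{B}(Z)=rZ.$$ Define the transformed instrument $\mathcal{M}'_k=\mathcal{B}\circ\mathcal{M}_k\circ\mathcal{B}^{-1}$ and the transformed initial state $\rho'=\mathcal{B}(\rho)$. Then: 1. $\tilde\nu_{0,1}(\mathcal{M}')=\tilde\nu_{1,0}(\mathcal{M})$ and $\tilde\nu_{1,0}(\mathcal{M}')=\tilde\nu_{0,1}(\mathcal{M})$. 2. For every $m\ge1$ and every $\vec k\in\{0,1\}^m$, $$\operatorname{tr}\big(\hat{\mathcal{M}}'_{k_m}\circ\cdots\circ\hat{\mathcal{M}}'_{k_1}(\rho')\big)=\operatorname{tr}\big(\hat{\mathcal{M}}_{k_m}\circ\cdots\circ\hat{\mathcal{M}}_{k_1}(\rho)\big),$$ where hats denote randomly compiled instruments. That is, the outcome distribution of the instrument benchmarking routine under ideal gates is unchanged. Consequently, no choice of $\vec c$ in the estimators $\kappa(\vec c)=\operatorname{tr}(Z^{-c_1}\rho)\prod_j\tilde\nu_{c_j,c_{j+1}}$ can distinguish $\tilde\nu_{0,1}$ from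 $\tilde\nu_{1,0}$.
   Context: Here $X,Y,Z$ are the Pauli matrices and $I$ is the $2\times2$ identity. Let $\chi_z(j)=(-1)^{zj}$ for $z,j\in\{0,1\}$. A single-qubit instrument $\{\mathcal{M}_0,\mathcal{M}_1\}$ is a pair of completely positive trace-non-increasing maps whose sum is trace preserving. Its generalized Pauli fidelities are $$\tilde\nu_{s,t}(\mathcal{M})=\tfrac12\sum_{k\in\{0,1\}}\chi_k(s-t)\operatorname{tr}\big(Z^t\mathcal{M}_k(Z^s)\big),\qquad s,t\in\{0,1\},$$ and the definition is applied verbatim to any family of linear maps. The randomly compiled version of an instrument is $$\hat{\mathcal{M}}_k=\tfrac18\sum_{a,b,x\in\{0,1\}}\mathcal{X}^x\mathcal{Z}^a\mathcal{M}_{k+x}\mathcal{Z}^b\mathcal{X}^x,$$ where $\mathcal{X}(\rho)=X\rho X$, $\mathcal{Z}(\rho)=Z\rho Z$, and indices are taken mod 2. Under ideal gates, $\operatorname{tr}(\hat{\mathcal{M}}_{k_m}\circ\cdots\circ\hat{\mathcal{M}}_{k_1}(\rho))$ is the probability that the instrument benchmarking routine returns $\vec k$. *)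

theory Defs
  imports "HOL-Analysis.Analysis"
begin

type_synonym qmat = "complex^2^2"

definition Iq :: qmat where "Iq = mat 1"
definition Xq :: qmat where "Xq = (\<chi> i j. if i = j then 0 else 1)"
definition Yq :: qmat where
  "Yq = (\<chi> i j. if i = j then 0 else if i = 0 then - \<i> else \<i>)"
definition Zq :: qmat where "Zq = (\<chi> i j. if i = j then (if i = 0 then 1 else -1) else 0)"

text \<open>Row 0 / column 0 is the computational basis state |0>, so
  Xq = [[0,1],[1,0]], Yq = [[0,-i],[i,0]], Zq = [[1,0],[0,-1]].\<close>

definition cscale :: "complex \<Rightarrow> qmat \<Rightarrow> qmat" where
  "cscale c A = (\<chi> i j. c * A $ i $ j)"

definition adj :: "qmat \<Rightarrow> qmat" where
  "adj A = (\<chi> i j. cnj (A $ j $ i))"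

definition Zpow :: "nat \<Rightarrow> qmat" where "Zpow t = (if t = 0 then Iq else Zq)"
definition Xpow :: "nat \<Rightarrow> qmat" where "Xpow t = (if t = 0 then Iq else Xq)"

definition conj_by :: "qmat \<Rightarrow> qmat \<Rightarrow> qmat" where
  "conj_by U A = U ** A ** adj U"

definition psd :: "qmat \<Rightarrow> bool" where
  "psd A \<longleftrightarrow> (\<forall>v::complex^2. (\<Sum>i\<in>UNIV. cnj (v $ i) * (A *v v) $ i) \<in> \<real> \<and>
                  0 \<le> Re (\<Sum>i\<in>UNIV. cnj (v $ i) * (A *v v) $ i))"

definition qstate :: "qmat \<Rightarrow> bool" where
  "qstate \<rho> \<longleftrightarrow> psd \<rho> \<and> trace \<rho> = 1"

definition completely_positive :: "(qmat \<Rightarrow> qmat) \<Rightarrow> bool" where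
  "completely_positive f \<longleftrightarrow>
     (\<exists>Ks :: qmat list. \<forall>A. f A = sum_list (map (\<lambda>K. K ** A ** adj K) Ks))"

definition trace_nonincreasing :: "(qmat \<Rightarrow> qmat) \<Rightarrow> bool" where
  "trace_nonincreasing f \<longleftrightarrow> (\<forall>A. psd A \<longrightarrow> Re (trace (f A)) \<le> Re (trace A))"

text \<open>A single-qubit instrument with outcomes 0 and 1 (only M 0 and M 1 are used).\<close>
definition instrument :: "(nat \<Rightarrow> qmat \<Rightarrow> qmat) \<Rightarrow> bool" where
  "instrument M \<longleftrightarrow>
     (\<forall>k\<in>{0,1}. completely_positive (M k) \<and> trace_nonincreasing (M k)) \<and>
     (\<forall>A. trace (M 0 A + M 1 A) = trace A)"

definition chi :: "nat \<Rightarrow> int \<Rightarrow> complex" where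
  "chi z j = (-1) ^ (z * nat (j mod 2))"

definition gpf :: "(nat \<Rightarrow> qmat \<Rightarrow> qmat) \<Rightarrow> nat \<Rightarrow> nat \<Rightarrow> complex" where
  "gpf M s t = (1/2) * (\<Sum>k\<in>{0,1::nat}. chi k (int s - int t) * trace (Zpow t ** M k (Zpow s)))"

definition rc :: "(nat \<Rightarrow> qmat \<Rightarrow> qmat) \<Rightarrow> nat \<Rightarrow> qmat \<Rightarrow> qmat" where
  "rc M k A = cscale (1/8) (\<Sum>a\<in>{0,1::nat}. \<Sum>b\<in>{0,1::nat}. \<Sum>x\<in>{0,1::nat}.
      conj_by (Xpow x) (conj_by (Zpow a) (M ((k + x) mod 2) (conj_by (Zpow b) (conj_by (Xpow x) A)))))"

text \<open>Apply M_{k_1}, then M_{k_2}, ..., then M_{k_m} where ks = [k_1,...,k_m].\<close>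
definition run_seq :: "(nat \<Rightarrow> qmat \<Rightarrow> qmat) \<Rightarrow> nat list \<Rightarrow> qmat \<Rightarrow> qmat" where
  "run_seq M ks \<rho> = foldl (\<lambda>\<sigma> k. M k \<sigma>) \<rho> ks"

definition clinear :: "(qmat \<Rightarrow> qmat) \<Rightarrow> bool" where
  "clinear f \<longleftrightarrow> (\<forall>A C. f (A + C) = f A + f C) \<and> (\<forall>c A. f (cscale c A) = cscale c (f A))"

end

theory Submission
  imports Defs
begin

text \<open>The map \<open>B\<close> is the diagonal superoperator rescaling the \<open>Z\<close>-component of a matrix
  by \<open>r\<close>. It preserves the trace and commutes with conjugation by \<open>X\<close> and \<open>Z\<close>, hence with
  the Pauli twirl of random compilation, so the randomly compiled version of the conjugated
  instrument is the conjugate of the randomly compiled instrument and all outcome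
  probabilities are unchanged. On the other hand \<open>\<nu>\<^sub>0\<^sub>,\<^sub>1\<close> is multiplied by \<open>r\<close> and \<open>\<nu>\<^sub>1\<^sub>,\<^sub>0\<close>
  by \<open>1/r\<close>, which for \<open>r = \<nu>\<^sub>1\<^sub>,\<^sub>0/\<nu>\<^sub>0\<^sub>,\<^sub>1\<close> swaps the two fidelities.\<close>

lemma UNIV_2_eq: "(UNIV :: 2 set) = {0, 1}"
proof -
  have "(2 :: 2) = 0" by simp
  then show ?thesis using UNIV_2 by (metis insert_commute)
qed

lemma all_2_iff: "(\<forall>i :: 2. P i) \<longleftrightarrow> P 0 \<and> P 1"
proof -
  have "(\<forall>i :: 2. P i) \<longleftrightarrow> (\<forall>i \<in> UNIV. P i)" by simp
  then show ?thesis by (simp add: UNIV_2_eq)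
qed

lemma sum_UNIV_2: "sum f (UNIV :: 2 set) = f 0 + f 1"
  by (simp add: UNIV_2_eq)

lemma qmat_eq_iff:
  "(A :: qmat) = C \<longleftrightarrow> A$0$0 = C$0$0 \<and> A$0$1 = C$0$1 \<and> A$1$0 = C$1$0 \<and> A$1$1 = C$1$1"
  by (simp add: vec_eq_iff all_2_iff)

lemmas qmat_simps = Iq_def Xq_def Yq_def Zq_def cscale_def adj_def conj_by_def
  matrix_matrix_mult_def trace_def sum_UNIV_2 mat_def

lemma trace_cscale: "trace (cscale c A) = c * trace A"
  by (simp add: qmat_simps algebra_simps)

lemma pauli_decomposition:
  "A = cscale ((A$0$0 + A$1$1) / 2) Iq + cscale ((A$0$1 + A$1$0) / 2) Xq
     + cscale (\<i> * (A$0$1 - A$1$0) / 2) Yq + cscale ((A$0$0 - A$1$1) / 2) Zq"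
  by (simp add: qmat_eq_iff qmat_simps field_simps)

definition z_rescale :: "complex \<Rightarrow> qmat \<Rightarrow> qmat" where
  "z_rescale r A = (\<chi> i j. if i = j
     then (A$0$0 + A$1$1) / 2 + (if i = 0 then r else - r) * (A$0$0 - A$1$1) / 2
     else A$i$j)"

lemma clinear_eq_z_rescale:
  assumes "clinear B" "B Iq = Iq" "B Xq = Xq" "B Yq = Yq" "B Zq = cscale r Zq"
  shows "B = z_rescale r"
proof
  fix A
  have "B A = B (cscale ((A$0$0 + A$1$1) / 2) Iq + cscale ((A$0$1 + A$1$0) / 2) Xq
     + cscale (\<i> * (A$0$1 - A$1$0) / 2) Yq + cscale ((A$0$0 - A$1$1) / 2) Zq)"
    using pauli_decomposition[of A] by simp
  also have "\<dots> = cscale ((A$0$0 + A$1$1) / 2) Iq + cscale ((A$0$1 + A$1$0) / 2) Xq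
     + cscale (\<i> * (A$0$1 - A$1$0) / 2) Yq + cscale ((A$0$0 - A$1$1) / 2) (cscale r Zq)"
    using assms unfolding clinear_def by simp
  also have "\<dots> = z_rescale r A"
    by (simp add: qmat_eq_iff qmat_simps z_rescale_def field_simps)
  finally show "B A = z_rescale r A" .
qed

lemma z_rescale_mult: "z_rescale r (z_rescale s A) = z_rescale (r * s) A"
  by (simp add: qmat_eq_iff z_rescale_def field_simps)

lemma z_rescale_1: "z_rescale 1 A = A"
  by (simp add: qmat_eq_iff z_rescale_def field_simps)

lemma z_rescale_inverse: "r \<noteq> 0 \<Longrightarrow> z_rescale (1 / r) (z_rescale r A) = A"
  by (simp add: z_rescale_mult z_rescale_1)

lemma inv_z_rescale:
  assumes "r \<noteq> 0"
  shows "inv (z_rescale r) = z_rescale (1 / r)"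
proof (rule inv_equality)
  show "z_rescale (1 / r) (z_rescale r A) = A" for A
    using assms by (rule z_rescale_inverse)
  show "z_rescale r (z_rescale (1 / r) A) = A" for A
    using z_rescale_inverse[of "1 / r" A] assms by simp
qed

lemma trace_z_rescale: "trace (z_rescale r A) = trace A"
  by (simp add: z_rescale_def qmat_simps field_simps)

lemma trace_Zq_z_rescale: "trace (Zq ** z_rescale r A) = r * trace (Zq ** A)"
  by (simp add: z_rescale_def qmat_simps field_simps)

lemma z_rescale_Iq: "z_rescale r Iq = Iq"
  by (simp add: qmat_eq_iff z_rescale_def qmat_simps)

lemma z_rescale_Zq: "z_rescale r Zq = cscale r Zq"
  by (simp add: qmat_eq_iff z_rescale_def qmat_simps)

lemma z_rescale_add: "z_rescale r (A + C) = z_rescale r A + z_rescale r C"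
  by (simp add: qmat_eq_iff z_rescale_def field_simps)

lemma z_rescale_cscale: "z_rescale r (cscale c A) = cscale c (z_rescale r A)"
  by (simp add: qmat_eq_iff z_rescale_def qmat_simps field_simps)

lemma z_rescale_conj_by_Xpow:
  "z_rescale r (conj_by (Xpow x) A) = conj_by (Xpow x) (z_rescale r A)"
  by (simp add: Xpow_def qmat_eq_iff z_rescale_def qmat_simps field_simps)

lemma z_rescale_conj_by_Zpow:
  "z_rescale r (conj_by (Zpow x) A) = conj_by (Zpow x) (z_rescale r A)"
  by (simp add: Zpow_def qmat_eq_iff z_rescale_def qmat_simps field_simps)

lemma completely_positive_cscale:
  assumes "completely_positive f"
  shows "f (cscale c A) = cscale c (f A)"
proof -
  obtain Ks where f: "\<And>A. f A = sum_list (map (\<lambda>K. K ** A ** adj K) Ks)"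
    using assms unfolding completely_positive_def by blast
  have "sum_list (map (\<lambda>K. K ** cscale c A ** adj K) Ks)
      = cscale c (sum_list (map (\<lambda>K. K ** A ** adj K) Ks))"
  proof (induction Ks)
    case Nil
    then show ?case by (simp add: qmat_eq_iff qmat_simps)
  next
    case (Cons K Ks)
    have "K ** cscale c A ** adj K = cscale c (K ** A ** adj K)"
      by (simp add: qmat_eq_iff qmat_simps algebra_simps)
    moreover have "cscale c (P + Q) = cscale c P + cscale c Q" for P Q
      by (simp add: qmat_eq_iff qmat_simps algebra_simps)
    ultimately show ?case using Cons by simp
  qed
  then show ?thesis by (simp add: f)
qed

lemma gpf_z_rescale_conj_01:
  "gpf (\<lambda>k. z_rescale r \<circ> M k \<circ> z_rescale s) 0 1 = r * gpf M 0 1"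
  by (simp add: gpf_def Zpow_def z_rescale_Iq trace_Zq_z_rescale algebra_simps)

lemma gpf_z_rescale_conj_10:
  assumes "\<And>k c A. k \<in> {0, 1} \<Longrightarrow> M k (cscale c A) = cscale c (M k A)"
  shows "gpf (\<lambda>k. z_rescale r \<circ> M k \<circ> z_rescale s) 1 0 = s * gpf M 1 0"
proof -
  have Iq_mult: "Iq ** A = A" for A by (simp add: Iq_def)
  show ?thesis
    by (simp add: gpf_def Zpow_def Iq_mult trace_z_rescale z_rescale_Zq assms trace_cscale
        algebra_simps)
qed

lemma rc_z_rescale_conj:
  "rc (\<lambda>k. z_rescale r \<circ> M k \<circ> z_rescale s) k A = z_rescale r (rc M k (z_rescale s A))"
  unfolding rc_def
  by (simp add: z_rescale_add z_rescale_cscale z_rescale_conj_by_Xpow z_rescale_conj_by_Zpow)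

lemma run_seq_rc_z_rescale_conj:
  assumes "r \<noteq> 0"
  shows "run_seq (rc (\<lambda>k. z_rescale r \<circ> M k \<circ> z_rescale (1 / r))) ks (z_rescale r \<rho>)
       = z_rescale r (run_seq (rc M) ks \<rho>)"
  unfolding run_seq_def
proof (induction ks arbitrary: \<rho>)
  case Nil
  then show ?case by simp
next
  case (Cons k ks)
  show ?case
    using Cons[of "rc M k \<rho>"]
    by (simp only: foldl_Cons rc_z_rescale_conj z_rescale_inverse[OF assms])
qed

theorem mainTheorem6:
  fixes M :: "nat \<Rightarrow> qmat \<Rightarrow> qmat" and \<rho> :: qmat and B :: "qmat \<Rightarrow> qmat" and r :: complex
  assumes instr: "instrument M"
    and state: "qstate \<rho>"
    and nz01: "gpf M 0 1 \<noteq> 0" and nz10: "gpf M 1 0 \<noteq> 0"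
    and r_def: "r = gpf M 1 0 / gpf M 0 1"
    and B_lin: "clinear B"
    and BI: "B Iq = Iq" and BX: "B Xq = Xq" and BY: "B Yq = Yq" and BZ: "B Zq = cscale r Zq"
  shows "let M' = (\<lambda>k. B \<circ> M k \<circ> inv B); \<rho>' = B \<rho> in
           gpf M' 0 1 = gpf M 1 0 \<and> gpf M' 1 0 = gpf M 0 1 \<and>
           (\<forall>ks. length ks \<ge> 1 \<longrightarrow> set ks \<subseteq> {0,1} \<longrightarrow>
              trace (run_seq (rc M') ks \<rho>') = trace (run_seq (rc M) ks \<rho>))"
proof -
  have r_nz: "r \<noteq> 0" using r_def nz01 nz10 by simp
  have B_eq: "B = z_rescale r" by (rule clinear_eq_z_rescale[OF B_lin BI BX BY BZ])
  have homogeneous: "M k (cscale c A) = cscale c (M k A)" if "k \<in> {0, 1}" for k c A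
    using instr that by (auto simp: instrument_def intro: completely_positive_cscale)
  let ?M' = "\<lambda>k. z_rescale r \<circ> M k \<circ> z_rescale (1 / r)"
  have "gpf ?M' 0 1 = gpf M 1 0"
    using gpf_z_rescale_conj_01[where r = r and s = "1 / r"] r_def nz01 by simp
  moreover have "gpf ?M' 1 0 = gpf M 0 1"
    using gpf_z_rescale_conj_10[where M = M and r = r and s = "1 / r"] homogeneous r_def nz10 by simp
  ultimately show ?thesis
    unfolding Let_def B_eq inv_z_rescale[OF r_nz]
    using run_seq_rc_z_rescale_conj[OF r_nz] by (simp add: trace_z_rescale)
qed

end
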